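(* If a judgment aggregation rule is strategyproof (with respect to Hamming-distance preferences and any extension of them to sets of judgments satisfying requirements (R1) and (R2)), then it satisfies neither the maximin property nor the equity property.
   Context: An agenda is a finite nonempty list $\Phi=(\phi_1,\dots,\phi_m)$ of propositional formulas; a judgment is $J\in\{0,1\}^m$, $J(\phi_k)$ its $k$-th entry. $\mathcal{J}(\Phi)\subseteq\{0,1\}^m$ is the nonempty set of admissible judgments; the agenda may be chosen so that $\mathcal{J}(\Phi)$ is any prescribed nonempty set of vectors. For a finite set of agents $N$, $|N|=n\ge2$, a profile is $\mathbf{P}=(J_1,\dots,J_n)\in\mathcal{J}(\Phi)^n$; $\mathbf{P}'=_{-i}\mathbf{P}$ means $\mathbf{P}'$ and $\mathbf{P}$ differ at most in agent $i$'s judgment. A rule $F$ maps every profile (every finite group, every agenda) to a nonempty $F(\mathbf{P})\subseteq\mathcal{J}(\Phi)$. Hamming distance $H(J,J')=\sum_k|J(\phi_k)-J'(\phi_k)|$. Preferences: agent $i$ with truthful judgment $J_i$ has $J\succeq_i J'$ iff $H(J_i,J)\le H(J_i,J')$ (strict part $\succ_i$). A preference $\mathrel{\mathring{\succeq}}_i$ over subsets of $\mathcal{J}(\Phi)$, with strict part $\mathrel{\mathring{\succ}}_i$, must satisfy (R1) $J\succeq_i J'$ iff $\{J\}\mathrel{\mathring{\succeq}}_i\{J'\}$; (R2) $X\mathrel{\mathring{\succ}}_i Y$ implies there exist $J\in X$, $J'\in Y$ with $J\succ_i J'$ and $\{J,J'\}\not\subseteq X\cap Y$. $F$ is manipulable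 by agent $i$ in $\mathbf{P}$ if there is $\mathbf{P}'=_{-i}\mathbf{P}$ with $F(\mathbf{P}')\mathrel{\mathring{\succ}}_i F(\mathbf{P})$; $F$ is strategyproof if it is not manipulable by any agent in any profile. Maximin property: for all $\mathbf{P}$ and $J\in F(\mathbf{P})$ there are no $J'\in\mathcal{J}(\Phi)$, $j\in N$ with $H(J_i,J')<H(J_j,J)$ for all $i\in N$. Equity property: for all $\mathbf{P}$ and $J\in F(\mathbf{P})$ there are no $J'\in\mathcal{J}(\Phi)$, $i',j'\in N$ with $|H(J_i,J')-H(J_j,J')|<|H(J_{i'},J)-H(J_{j'},J)|$ for all $i,j\in N$. *)

theory Defs
  imports Main
begin

text \<open>Agendas are abstract objects of a type 'g; the map adm sends an agenda to its
  nonempty set of admissible judgments (all of a common length m \<ge> 1).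
  Since the agenda can be chosen to realise any nonempty set of vectors, we
  assume adm is onto all such sets. Profiles are lists of judgments of length n;
  agent i is position i < n.\<close>

type_synonym jdg = "bool list"

definition hamming :: "jdg \<Rightarrow> jdg \<Rightarrow> nat" where
  "hamming J J' = card {k. k < length J \<and> J ! k \<noteq> J' ! k}"

definition valid_agenda_set :: "jdg set \<Rightarrow> bool" where
  "valid_agenda_set A \<longleftrightarrow> A \<noteq> {} \<and> (\<exists>m\<ge>1. \<forall>J\<in>A. length J = m)"

definition agenda_model :: "('g \<Rightarrow> jdg set) \<Rightarrow> bool" where
  "agenda_model adm \<longleftrightarrow> (\<forall>\<Phi>. valid_agenda_set (adm \<Phi>)) \<and>
     (\<forall>A. valid_agenda_set A \<longrightarrow> (\<exists>\<Phi>. adm \<Phi> = A))"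

definition is_profile :: "('g \<Rightarrow> jdg set) \<Rightarrow> 'g \<Rightarrow> nat \<Rightarrow> jdg list \<Rightarrow> bool" where
  "is_profile adm \<Phi> n P \<longleftrightarrow> n \<ge> 2 \<and> length P = n \<and> set P \<subseteq> adm \<Phi>"

definition is_rule ::
  "('g \<Rightarrow> jdg set) \<Rightarrow> ('g \<Rightarrow> jdg list \<Rightarrow> jdg set) \<Rightarrow> bool" where
  "is_rule adm F \<longleftrightarrow> (\<forall>\<Phi> n P. is_profile adm \<Phi> n P \<longrightarrow>
      F \<Phi> P \<noteq> {} \<and> F \<Phi> P \<subseteq> adm \<Phi>)"

text \<open>ext \<Phi> Ji X Y: an agent with truthful jdg Ji weakly prefers X to Y.\<close>
definition strict_ext ::
  "('g \<Rightarrow> jdg \<Rightarrow> jdg set \<Rightarrow> jdg set \<Rightarrow> bool)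
    \<Rightarrow> 'g \<Rightarrow> jdg \<Rightarrow> jdg set \<Rightarrow> jdg set \<Rightarrow> bool" where
  "strict_ext ext \<Phi> Ji X Y \<longleftrightarrow> ext \<Phi> Ji X Y \<and> \<not> ext \<Phi> Ji Y X"

definition R1 :: "('g \<Rightarrow> jdg set)
    \<Rightarrow> ('g \<Rightarrow> jdg \<Rightarrow> jdg set \<Rightarrow> jdg set \<Rightarrow> bool) \<Rightarrow> bool" where
  "R1 adm ext \<longleftrightarrow> (\<forall>\<Phi>. \<forall>Ji\<in>adm \<Phi>. \<forall>J\<in>adm \<Phi>. \<forall>J'\<in>adm \<Phi>.
      hamming Ji J \<le> hamming Ji J' \<longleftrightarrow> ext \<Phi> Ji {J} {J'})"

definition R2 :: "('g \<Rightarrow> jdg set)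
    \<Rightarrow> ('g \<Rightarrow> jdg \<Rightarrow> jdg set \<Rightarrow> jdg set \<Rightarrow> bool) \<Rightarrow> bool" where
  "R2 adm ext \<longleftrightarrow> (\<forall>\<Phi>. \<forall>Ji\<in>adm \<Phi>. \<forall>X Y. X \<subseteq> adm \<Phi> \<longrightarrow> Y \<subseteq> adm \<Phi> \<longrightarrow>
      strict_ext ext \<Phi> Ji X Y \<longrightarrow>
      (\<exists>J\<in>X. \<exists>J'\<in>Y. hamming Ji J < hamming Ji J' \<and> \<not> ({J, J'} \<subseteq> X \<inter> Y)))"

definition manipulable ::
  "('g \<Rightarrow> jdg set) \<Rightarrow> ('g \<Rightarrow> jdg \<Rightarrow> jdg set \<Rightarrow> jdg set \<Rightarrow> bool)
    \<Rightarrow> ('g \<Rightarrow> jdg list \<Rightarrow> jdg set) \<Rightarrow> 'g \<Rightarrow> nat \<Rightarrow> jdg list \<Rightarrow> nat \<Rightarrow> bool" where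
  "manipulable adm ext F \<Phi> n P i \<longleftrightarrow>
     (\<exists>J'\<in>adm \<Phi>. strict_ext ext \<Phi> (P ! i) (F \<Phi> (P[i := J'])) (F \<Phi> P))"

definition strategyproof ::
  "('g \<Rightarrow> jdg set) \<Rightarrow> ('g \<Rightarrow> jdg \<Rightarrow> jdg set \<Rightarrow> jdg set \<Rightarrow> bool)
    \<Rightarrow> ('g \<Rightarrow> jdg list \<Rightarrow> jdg set) \<Rightarrow> bool" where
  "strategyproof adm ext F \<longleftrightarrow>
     (\<forall>\<Phi> n P i. is_profile adm \<Phi> n P \<and> i < n \<longrightarrow> \<not> manipulable adm ext F \<Phi> n P i)"

definition maximin_property ::
  "('g \<Rightarrow> jdg set) \<Rightarrow> ('g \<Rightarrow> jdg list \<Rightarrow> jdg set) \<Rightarrow> bool" where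
  "maximin_property adm F \<longleftrightarrow> (\<forall>\<Phi> n P. is_profile adm \<Phi> n P \<longrightarrow> (\<forall>J\<in>F \<Phi> P.
     \<not> (\<exists>J'\<in>adm \<Phi>. \<exists>j<n. \<forall>i<n. hamming (P ! i) J' < hamming (P ! j) J)))"

definition equity_property ::
  "('g \<Rightarrow> jdg set) \<Rightarrow> ('g \<Rightarrow> jdg list \<Rightarrow> jdg set) \<Rightarrow> bool" where
  "equity_property adm F \<longleftrightarrow> (\<forall>\<Phi> n P. is_profile adm \<Phi> n P \<longrightarrow> (\<forall>J\<in>F \<Phi> P.
     \<not> (\<exists>J'\<in>adm \<Phi>. \<exists>i'<n. \<exists>j'<n. \<forall>i<n. \<forall>j<n.
         \<bar>int (hamming (P ! i) J') - int (hamming (P ! j) J')\<bar>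
           < \<bar>int (hamming (P ! i') J) - int (hamming (P ! j') J)\<bar>)))"

end

theory Submission
  imports Defs
begin

text \<open>Take the agenda whose admissible judgments are the staircases \<open>s k\<close> (first \<open>k\<close> of four
  entries true) for \<open>k \<in> {0, 2, 3, 4}\<close>, so that Hamming distance is \<open>|k - l|\<close>. At the profile
  \<open>(s 2, s 4)\<close> both maximin and equity single out the compromise \<open>s 3\<close>; if the first agent
  reports \<open>s 0\<close> instead, they single out \<open>s 2\<close>, her true judgment. Since singletons are compared
  by (R1), this misreport is profitable.\<close>

definition staircase :: "nat \<Rightarrow> nat \<Rightarrow> jdg" where
  "staircase m k = map (\<lambda>i. i < k) [0..<m]"

lemma length_staircase [simp]: "length (staircase m k) = m"
  by (simp add: staircase_def)

lemma hamming_staircase [simp]: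
  assumes "k \<le> m" "l \<le> m"
  shows "hamming (staircase m k) (staircase m l) = max k l - min k l"
proof -
  have "{i. i < m \<and> staircase m k ! i \<noteq> staircase m l ! i} = {min k l..<max k l}"
    using assms by (auto simp: staircase_def max_def min_def)
  then show ?thesis
    by (simp add: hamming_def)
qed

lemma staircase_eq_iff [simp]:
  assumes "k \<le> m" "l \<le> m"
  shows "staircase m k = staircase m l \<longleftrightarrow> k = l"
proof
  assume "staircase m k = staircase m l"
  then have "hamming (staircase m k) (staircase m l) = 0"
    by (simp add: hamming_def)
  with assms show "k = l"
    by simp
qed simp

lemma maximin_property_forces_singleton:
  assumes "maximin_property adm F" "is_rule adm F" "is_profile adm \<Phi> n P"
    and "J0 \<in> adm \<Phi>" "\<forall>i<n. hamming (P ! i) J0 \<le> d"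
    and "\<forall>J\<in>adm \<Phi> - {J0}. \<exists>j<n. d < hamming (P ! j) J"
  shows "F \<Phi> P = {J0}"
proof -
  have "J = J0" if "J \<in> F \<Phi> P" for J
  proof (rule ccontr)
    assume "J \<noteq> J0"
    moreover have "J \<in> adm \<Phi>"
      using assms(2,3) that by (auto simp: is_rule_def)
    ultimately obtain j where "j < n" "d < hamming (P ! j) J"
      using assms(6) by blast
    then have "\<forall>i<n. hamming (P ! i) J0 < hamming (P ! j) J"
      using assms(5) by (meson le_less_trans)
    then show False
      using assms(1,3,4) that \<open>j < n\<close> unfolding maximin_property_def by blast
  qed
  moreover have "F \<Phi> P \<noteq> {}"
    using assms(2,3) by (simp add: is_rule_def)
  ultimately show ?thesis
    by blast
qed

lemma equity_property_forces_singleton: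
  assumes "equity_property adm F" "is_rule adm F" "is_profile adm \<Phi> n P"
    and "J0 \<in> adm \<Phi>" "\<forall>i<n. hamming (P ! i) J0 = d"
    and "\<forall>J\<in>adm \<Phi> - {J0}. \<exists>i<n. \<exists>j<n. hamming (P ! i) J \<noteq> hamming (P ! j) J"
  shows "F \<Phi> P = {J0}"
proof -
  have "J = J0" if "J \<in> F \<Phi> P" for J
  proof (rule ccontr)
    assume "J \<noteq> J0"
    moreover have "J \<in> adm \<Phi>"
      using assms(2,3) that by (auto simp: is_rule_def)
    ultimately obtain i' j' where "i' < n" "j' < n" "hamming (P ! i') J \<noteq> hamming (P ! j') J"
      using assms(6) by blast
    then have "\<forall>i<n. \<forall>j<n. \<bar>int (hamming (P ! i) J0) - int (hamming (P ! j) J0)\<bar>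
        < \<bar>int (hamming (P ! i') J) - int (hamming (P ! j') J)\<bar>"
      using assms(5) by simp
    then show False
      using assms(1,3,4) that \<open>i' < n\<close> \<open>j' < n\<close> unfolding equity_property_def by blast
  qed
  moreover have "F \<Phi> P \<noteq> {}"
    using assms(2,3) by (simp add: is_rule_def)
  ultimately show ?thesis
    by blast
qed

lemma singleton_improvement_not_strategyproof:
  assumes "R1 adm ext" "is_profile adm \<Phi> n P" "i < n" "J' \<in> adm \<Phi>"
    and "F \<Phi> P = {J}" "F \<Phi> (P[i := J']) = {K}" "J \<in> adm \<Phi>" "K \<in> adm \<Phi>"
    and "hamming (P ! i) K < hamming (P ! i) J"
  shows "\<not> strategyproof adm ext F"
proof -
  have "P ! i \<in> adm \<Phi>"
    using assms(2,3) by (auto simp: is_profile_def)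
  then have "ext \<Phi> (P ! i) {K} {J} \<longleftrightarrow> hamming (P ! i) K \<le> hamming (P ! i) J"
    and "ext \<Phi> (P ! i) {J} {K} \<longleftrightarrow> hamming (P ! i) J \<le> hamming (P ! i) K"
    using assms(1,7,8) unfolding R1_def by blast+
  then have "strict_ext ext \<Phi> (P ! i) {K} {J}"
    using assms(9) by (simp add: strict_ext_def)
  then have "manipulable adm ext F \<Phi> n P i"
    using assms(4-6) unfolding manipulable_def by (metis (no_types))
  then show ?thesis
    using assms(2,3) by (auto simp: strategyproof_def)
qed

lemma agenda_model_staircases:
  assumes "agenda_model adm" "m \<ge> 1" "K \<noteq> {}"
  obtains \<Phi> where "adm \<Phi> = staircase m ` K"
proof -
  have "valid_agenda_set (staircase m ` K)"
    using assms(2,3) by (auto simp: valid_agenda_set_def)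
  then show ?thesis
    using assms(1) that unfolding agenda_model_def by blast
qed

theorem proposition4:
  fixes adm :: "'g \<Rightarrow> jdg set"
    and F :: "'g \<Rightarrow> jdg list \<Rightarrow> jdg set"
    and ext :: "'g \<Rightarrow> jdg \<Rightarrow> jdg set \<Rightarrow> jdg set \<Rightarrow> bool"
  assumes "agenda_model adm"
    and "is_rule adm F"
    and "R1 adm ext"
    and "R2 adm ext"
    and "strategyproof adm ext F"
  shows "\<not> maximin_property adm F \<and> \<not> equity_property adm F"
proof -
  let ?s = "staircase 4" and ?P = "[staircase 4 2, staircase 4 4]"
  let ?Q = "?P[0 := ?s 0]"
  obtain \<Phi> where adm: "adm \<Phi> = ?s ` {0, 2, 3, 4}"
    by (rule agenda_model_staircases [OF assms(1), where m = 4 and K = "{0, 2, 3, 4}"]) auto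
  have profiles: "is_profile adm \<Phi> 2 ?P" "is_profile adm \<Phi> 2 ?Q"
    by (auto simp: is_profile_def adm)
  have no_switch: "\<not> (F \<Phi> ?P = {?s 3} \<and> F \<Phi> ?Q = {?s 2})"
    using singleton_improvement_not_strategyproof [OF assms(3) profiles(1), of 0 "?s 0"] assms(5)
    by (auto simp: adm)
  note example_simps = adm numeral_2_eq_2 All_less_Suc Ex_less_Suc
  have "\<not> maximin_property adm F"
  proof
    assume maximin: "maximin_property adm F"
    have "F \<Phi> ?P = {?s 3}"
      using maximin assms(2) profiles(1)
      by (rule maximin_property_forces_singleton [where d = 1]) (auto simp: example_simps)
    moreover have "F \<Phi> ?Q = {?s 2}"
      using maximin assms(2) profiles(2)
      by (rule maximin_property_forces_singleton [where d = 2]) (auto simp: example_simps)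
    ultimately show False
      using no_switch by blast
  qed
  moreover have "\<not> equity_property adm F"
  proof
    assume equity: "equity_property adm F"
    have "F \<Phi> ?P = {?s 3}"
      using equity assms(2) profiles(1)
      by (rule equity_property_forces_singleton [where d = 1]) (auto simp: example_simps)
    moreover have "F \<Phi> ?Q = {?s 2}"
      using equity assms(2) profiles(2)
      by (rule equity_property_forces_singleton [where d = 2]) (auto simp: example_simps)
    ultimately show False
      using no_switch by blast
  qed
  ultimately show ?thesis ..
qed

end
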